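(* Let $m,k\in\mathbb{N}$ and let $\gamma\in\mathbb{C}$ with $\gamma,\ 1-2m-\gamma\notin\mathbb{Z}_0^-$. Then \[ {}_3F_2\left[\begin{array}{r} -2m,\ 1+k,\ \gamma;\\ -2m-k,\ 1-2m-\gamma;\end{array}1\right]_{2m}=\frac{(1+k)_{m}(\gamma)_{m}2^{2m}\left(\frac{1}{2}\right)_m(1+k+\gamma)_{2m}}{(1+k)_{2m}(\gamma)_{2m}(1+k+\gamma)_{m}}. \]
   Context: $\mathbb{N}=\{1,2,3,\dots\}$, $\mathbb{Z}_0^-=\{0,-1,-2,\dots\}$. For $a\in\mathbb{C}$ and $n\in\mathbb{N}_0$, $(a)_0=1$ and $(a)_n=a(a+1)\cdots(a+n-1)$. For $N\in\mathbb{N}_0$, ${}_3F_2\left[\begin{array}{r} a_1,a_2,a_3;\\ b_1,b_2;\end{array}z\right]_N=\sum_{n=0}^{N}\frac{(a_1)_n(a_2)_n(a_3)_n}{(b_1)_n(b_2)_n}\frac{z^n}{n!}$ (the sum of the first $N+1$ terms), defined whenever $(b_1)_n(b_2)_n\neq0$ for $0\le n\le N$. *)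

theory Defs
  imports "HOL-Analysis.Analysis"
begin

definition hyp3F2_trunc ::
  "complex \<Rightarrow> complex \<Rightarrow> complex \<Rightarrow> complex \<Rightarrow> complex \<Rightarrow> complex \<Rightarrow> nat \<Rightarrow> complex" where
  "hyp3F2_trunc a1 a2 a3 b1 b2 z N =
     (\<Sum>n\<le>N. pochhammer a1 n * pochhammer a2 n * pochhammer a3 n /
              (pochhammer b1 n * pochhammer b2 n) * z ^ n / of_nat (fact n))"

end

theory Submission
  imports Defs
begin

text \<open>
  The left-hand side is the terminating well-poised (Dixon) series
  3F2[-2m, b, c; 1-2m-b, 1-2m-c; 1] with b = 1+k and c = \<gamma>, evaluated by Zeilberger's creative
  telescoping. Let F(m,n) be its terms and \<rho>(m) the ratio of consecutive right-hand sides. A rational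
  certificate R gives F(m+1,n) - \<rho>(m) F(m,n) = G(n+1) - G(n) with G(n) = F(m+1,n) R(m,n).
  Summing over n < 2m+2, where F(m,2m+1) = 0, G(0) = 0 and G(2m+2) = -F(m+1,2m+2), shows that the
  sums obey the recurrence S(m+1) = \<rho>(m) S(m) of the right-hand side, and both are 1 at m = 0.
  All denominators stay nonzero as long as b and c are not integers at most 1 and b + c is not an
  integer at most 0, which is what the hypotheses provide.
\<close>

definition hyp3F2_term :: "'a::field_char_0 \<Rightarrow> 'a \<Rightarrow> 'a \<Rightarrow> 'a \<Rightarrow> 'a \<Rightarrow> nat \<Rightarrow> 'a" where
  "hyp3F2_term a1 a2 a3 b1 b2 n =
     pochhammer a1 n * pochhammer a2 n * pochhammer a3 n / (pochhammer b1 n * pochhammer b2 n * fact n)"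

lemma hyp3F2_trunc_at_1:
  "hyp3F2_trunc a1 a2 a3 b1 b2 1 N = (\<Sum>n\<le>N. hyp3F2_term a1 a2 a3 b1 b2 n)"
  by (simp add: hyp3F2_trunc_def hyp3F2_term_def)

lemma hyp3F2_term_Suc:
  "hyp3F2_term a1 a2 a3 b1 b2 (Suc n) = hyp3F2_term a1 a2 a3 b1 b2 n *
     ((a1 + of_nat n) * (a2 + of_nat n) * (a3 + of_nat n) /
      ((b1 + of_nat n) * (b2 + of_nat n) * (of_nat n + 1)))"
  unfolding hyp3F2_term_def pochhammer_Suc fact_Suc times_divide_times_eq
  by (simp add: ac_simps)

lemma pochhammer_shift_by_two:
  "pochhammer a n * ((a + of_nat n) * (a + of_nat n + 1)) = a * (a + 1) * pochhammer (a + 2) n"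
proof -
  have "pochhammer a (Suc (Suc n)) = pochhammer a n * ((a + of_nat n) * (a + of_nat n + 1))"
    by (simp add: pochhammer_Suc algebra_simps)
  moreover have "pochhammer a (Suc (Suc n)) = a * (a + 1) * pochhammer (a + 2) n"
    by (simp add: pochhammer_rec add.assoc mult.assoc)
  ultimately show ?thesis by simp
qed

lemma of_nat_add_1_neq_0: "of_nat n + 1 \<noteq> (0 :: 'a::semiring_char_0)"
  using of_nat_neq_0[of n] by (simp add: add.commute)

lemma add_of_int_neq_0:
  fixes x :: "'a::ring_1"
  assumes "x - 1 \<notin> \<int>\<^sub>\<le>\<^sub>0" and "-1 \<le> j"
  shows "x + of_int j \<noteq> 0"
proof
  assume "x + of_int j = 0"
  then have "x - 1 = of_int (- j - 1)"
    by (simp add: eq_neg_iff_add_eq_0[symmetric])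
  moreover have "of_int (- j - 1) \<in> (\<int>\<^sub>\<le>\<^sub>0 :: 'a set)"
    using assms(2) by (intro nonpos_Ints_of_int) simp
  ultimately show False
    using assms(1) by simp
qed

lemma plus_of_nat_notin_nonpos_Ints:
  fixes x :: "'a::ring_1"
  assumes "x \<notin> \<int>\<^sub>\<le>\<^sub>0"
  shows "x + of_nat n \<notin> \<int>\<^sub>\<le>\<^sub>0"
  using nonpos_Ints_diff_Nats[of "x + of_nat n" "of_nat n"] assms by auto

lemma diff_one_notin_nonpos_Ints:
  fixes x :: "'a::ring_1"
  assumes "x \<notin> \<int>\<^sub>\<le>\<^sub>0" and "1 - of_nat n - x \<notin> \<int>\<^sub>\<le>\<^sub>0"
  shows "x - 1 \<notin> \<int>\<^sub>\<le>\<^sub>0"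
proof
  assume "x - 1 \<in> \<int>\<^sub>\<le>\<^sub>0"
  then obtain j where j: "x - 1 = - of_nat j"
    by (auto elim!: nonpos_Ints_cases')
  show False
  proof (cases j)
    case 0
    then have "1 - of_nat n - x = - of_nat n"
      using j by simp
    with assms(2) show False by simp
  next
    case (Suc i)
    then have "x = - of_nat i"
      using j by (simp add: eq_neg_iff_add_eq_0 algebra_simps)
    with assms(1) show False by simp
  qed
qed

definition dixon_term :: "'a::field_char_0 \<Rightarrow> 'a \<Rightarrow> nat \<Rightarrow> nat \<Rightarrow> 'a" where
  "dixon_term b c m n =
     hyp3F2_term (- 2 * of_nat m) b c (1 - 2 * of_nat m - b) (1 - 2 * of_nat m - c) n"

definition dixon_sum :: "'a::field_char_0 \<Rightarrow> 'a \<Rightarrow> nat \<Rightarrow> 'a" where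
  "dixon_sum b c m = (\<Sum>n\<le>2 * m. dixon_term b c m n)"

definition dixon_closed_form :: "'a::field_char_0 \<Rightarrow> 'a \<Rightarrow> nat \<Rightarrow> 'a" where
  "dixon_closed_form b c m =
     pochhammer b m * pochhammer c m * 2 ^ (2 * m) * pochhammer (1 / 2) m * pochhammer (b + c) (2 * m)
     / (pochhammer b (2 * m) * pochhammer c (2 * m) * pochhammer (b + c) m)"

definition dixon_ratio :: "'a::field_char_0 \<Rightarrow> 'a \<Rightarrow> 'a \<Rightarrow> 'a" where
  "dixon_ratio b c M =
     (b + M) * (c + M) * (2 * (2 * M + 1)) * (b + c + 2 * M) * (b + c + 2 * M + 1)
     / ((b + 2 * M) * (b + 2 * M + 1) * (c + 2 * M) * (c + 2 * M + 1) * (b + c + M))"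

lemma dixon_closed_form_Suc:
  "dixon_closed_form b c (Suc m) = dixon_ratio b c (of_nat m) * dixon_closed_form b c m"
proof -
  define M :: 'a where "M = of_nat m"
  have Suc_m: "pochhammer x (Suc m) = pochhammer x m * (x + M)" for x :: 'a
    by (simp add: pochhammer_Suc M_def)
  have double_Suc_m: "pochhammer x (2 * Suc m) = pochhammer x (2 * m) * ((x + 2 * M) * (x + 2 * M + 1))" for x :: 'a
    by (simp add: pochhammer_Suc M_def algebra_simps)
  have power_double_Suc_m: "(2 :: 'a) ^ (2 * Suc m) = 2 ^ (2 * m) * 4"
    by simp
  have "dixon_closed_form b c (Suc m) = dixon_closed_form b c m *
     ((b + M) * (c + M) * (4 * (1 / 2 + M)) * ((b + c + 2 * M) * (b + c + 2 * M + 1))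
      / (((b + 2 * M) * (b + 2 * M + 1)) * ((c + 2 * M) * (c + 2 * M + 1)) * (b + c + M)))"
    unfolding dixon_closed_form_def Suc_m double_Suc_m power_double_Suc_m
    by (simp only: times_divide_times_eq mult_ac)
  also have "4 * (1 / 2 + M) = 2 * (2 * M + 1)"
    by (simp add: algebra_simps)
  finally show ?thesis
    by (simp add: dixon_ratio_def M_def mult_ac)
qed

text \<open>The rational certificate found by Zeilberger's algorithm for \<open>dixon_sum\<close>.\<close>

definition dixon_cert_poly :: "'a::idom \<Rightarrow> 'a \<Rightarrow> 'a \<Rightarrow> 'a \<Rightarrow> 'a" where
  "dixon_cert_poly b c M N =
     (M + 1) * N * (N - 6 * M - 2 * b - 2 * c - 3)
     + (b + c + 2 * M + 1) * (b + c + 4 * M ^ 2 + 7 * M + 2) - b * c * (b + c + M)"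

definition dixon_certificate :: "'a::field_char_0 \<Rightarrow> 'a \<Rightarrow> 'a \<Rightarrow> 'a \<Rightarrow> 'a" where
  "dixon_certificate b c M N =
     N * dixon_cert_poly b c M N / (2 * (M + 1) * (b + c + M) * (b + 2 * M + 1 - N) * (c + 2 * M + 1 - N))"

lemma dixon_cert_poly_identity:
  fixes b c M N :: "'a::idom"
  shows "2 * (M + 1) * (b + c + M) * ((b + 2 * M + 1 - N) * (b + 2 * M - N) * (c + 2 * M + 1 - N) * (c + 2 * M - N))
           - 2 * ((b + M) * (c + M) * (b + c + 2 * M) * (b + c + 2 * M + 1) * ((2 * M + 2 - N) * (2 * M + 1 - N)))
         = (N - 2 * M - 2) * (b + N) * (c + N) * dixon_cert_poly b c M (N + 1)
           - N * (b + 2 * M - N) * (c + 2 * M - N) * dixon_cert_poly b c M N"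
  unfolding dixon_cert_poly_def by algebra

lemma dixon_cert_poly_endpoint:
  fixes b c M :: "'a::idom"
  shows "dixon_cert_poly b c M (2 * M + 2) = (b + c + M) * (b - 1) * (1 - c)"
  unfolding dixon_cert_poly_def by algebra

lemma dixon_certificate_identity:
  fixes b c M N :: "'a::field_char_0"
  defines "g \<equiv> 2 * (M + 1) * (b + c + M)"
    and "d1 \<equiv> b + 2 * M + 1 - N" and "d2 \<equiv> b + 2 * M - N"
    and "d3 \<equiv> c + 2 * M + 1 - N" and "d4 \<equiv> c + 2 * M - N"
    and "U \<equiv> (b + M) * (c + M) * (b + c + 2 * M) * (b + c + 2 * M + 1)"
    and "y \<equiv> (2 * M + 2 - N) * (2 * M + 1 - N)"
    and "W \<equiv> (N - 2 * M - 2) * (b + N) * (c + N)"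
  assumes nonzero: "g \<noteq> 0" "d1 \<noteq> 0" "d2 \<noteq> 0" "d3 \<noteq> 0" "d4 \<noteq> 0" "N + 1 \<noteq> 0"
  shows "1 - 2 * (U * y) / (g * (d1 * d2 * d3 * d4))
         = W / (d1 * d3 * (N + 1)) * dixon_certificate b c M (N + 1) - dixon_certificate b c M N"
proof -
  \<comment> \<open>As a variable, \<open>N'\<close> is not multiplied out by \<open>field_simps\<close>.\<close>
  define N' where "N' = N + 1"
  have "N' \<noteq> 0" using nonzero(6) by (simp add: N'_def)
  have poly: "g * (d1 * d2 * d3 * d4) - 2 * (U * y)
      = W * dixon_cert_poly b c M N' - N * d2 * d4 * dixon_cert_poly b c M N"
    unfolding g_def d1_def d2_def d3_def d4_def U_def y_def W_def N'_def
    by (rule dixon_cert_poly_identity)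
  have "b + 2 * M + 1 - N' = d2" "c + 2 * M + 1 - N' = d4"
    by (simp_all add: N'_def d2_def d4_def)
  then have certificate_N': "dixon_certificate b c M N' = N' * dixon_cert_poly b c M N' / (g * d2 * d4)"
    by (simp only: dixon_certificate_def g_def)
  have certificate_N: "dixon_certificate b c M N = N * dixon_cert_poly b c M N / (g * d1 * d3)"
    by (simp only: dixon_certificate_def g_def d1_def d3_def)
  have "1 - 2 * (U * y) / (g * (d1 * d2 * d3 * d4))
      = (g * (d1 * d2 * d3 * d4) - 2 * (U * y)) / (g * (d1 * d2 * d3 * d4))"
    using nonzero by (simp add: field_simps)
  also have "\<dots> = (W * dixon_cert_poly b c M N' - N * d2 * d4 * dixon_cert_poly b c M N) / (g * (d1 * d2 * d3 * d4))"
    by (simp only: poly)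
  also have "\<dots> = W / (d1 * d3 * N') * (N' * dixon_cert_poly b c M N' / (g * d2 * d4))
                  - N * dixon_cert_poly b c M N / (g * d1 * d3)"
    using nonzero \<open>N' \<noteq> 0\<close> by (simp add: field_simps)
  finally show ?thesis
    unfolding N'_def[symmetric] certificate_N' certificate_N .
qed

lemma dixon_term_Suc_right:
  fixes b c :: "'a::field_char_0" and m n :: nat
  defines "M \<equiv> of_nat m" and "N \<equiv> of_nat n"
  shows "dixon_term b c m (Suc n) = dixon_term b c m n *
    ((N - 2 * M) * (b + N) * (c + N) / ((b + 2 * M - 1 - N) * (c + 2 * M - 1 - N) * (N + 1)))"
proof -
  have "(1 - 2 * M - b + N) * (1 - 2 * M - c + N) = (b + 2 * M - 1 - N) * (c + 2 * M - 1 - N)"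
    by (simp add: algebra_simps)
  then show ?thesis
    unfolding dixon_term_def hyp3F2_term_Suc M_def N_def by (simp add: ac_simps)
qed

lemma dixon_term_Suc_left:
  fixes b c :: "'a::field_char_0" and m n :: nat
  defines "M \<equiv> of_nat m" and "N \<equiv> of_nat n"
  assumes "b + 2 * M \<noteq> 0" "b + 2 * M + 1 \<noteq> 0" "c + 2 * M \<noteq> 0" "c + 2 * M + 1 \<noteq> 0"
  shows "dixon_term b c m n = dixon_term b c (Suc m) n *
    ((2 * M + 2 - N) * (2 * M + 1 - N) * ((b + 2 * M) * (b + 2 * M + 1)) * ((c + 2 * M) * (c + 2 * M + 1))
     / (2 * (M + 1) * (2 * M + 1) * ((b + 2 * M + 1 - N) * (b + 2 * M - N)) * ((c + 2 * M + 1 - N) * (c + 2 * M - N))))"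
proof -
  have "M + 1 \<noteq> 0" "2 * M + 1 \<noteq> 0"
    using of_nat_add_1_neq_0[of m] of_nat_add_1_neq_0[of "2 * m"] by (simp_all add: M_def)
  then have "2 * (M + 1) * (2 * M + 1) \<noteq> 0"
    by (metis mult_eq_0_iff zero_neq_numeral)
  moreover have "pochhammer (- 2 * (M + 1)) n * ((2 * M + 2 - N) * (2 * M + 1 - N))
      = 2 * (M + 1) * (2 * M + 1) * pochhammer (- 2 * M) n"
    using pochhammer_shift_by_two[of "- 2 * (M + 1)" n] by (simp add: N_def algebra_simps)
  ultimately have numerator: "pochhammer (- 2 * M) n
      = pochhammer (- 2 * (M + 1)) n * ((2 * M + 2 - N) * (2 * M + 1 - N)) / (2 * (M + 1) * (2 * M + 1))"
    by (simp add: eq_divide_eq)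
  have "pochhammer (1 - 2 * (M + 1) - b) n * ((b + 2 * M + 1 - N) * (b + 2 * M - N))
      = (b + 2 * M) * (b + 2 * M + 1) * pochhammer (1 - 2 * M - b) n"
    using pochhammer_shift_by_two[of "1 - 2 * (M + 1) - b" n] by (simp add: N_def algebra_simps)
  then have denominator_b: "pochhammer (1 - 2 * M - b) n
      = pochhammer (1 - 2 * (M + 1) - b) n * ((b + 2 * M + 1 - N) * (b + 2 * M - N)) / ((b + 2 * M) * (b + 2 * M + 1))"
    using assms by (simp add: eq_divide_eq)
  have "pochhammer (1 - 2 * (M + 1) - c) n * ((c + 2 * M + 1 - N) * (c + 2 * M - N))
      = (c + 2 * M) * (c + 2 * M + 1) * pochhammer (1 - 2 * M - c) n"
    using pochhammer_shift_by_two[of "1 - 2 * (M + 1) - c" n] by (simp add: N_def algebra_simps)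
  then have denominator_c: "pochhammer (1 - 2 * M - c) n
      = pochhammer (1 - 2 * (M + 1) - c) n * ((c + 2 * M + 1 - N) * (c + 2 * M - N)) / ((c + 2 * M) * (c + 2 * M + 1))"
    using assms by (simp add: eq_divide_eq)
  have "of_nat (Suc m) = M + 1"
    by (simp add: M_def)
  then show ?thesis
    unfolding dixon_term_def hyp3F2_term_def M_def[symmetric] numerator denominator_b denominator_c
    by (simp add: divide_inverse inverse_mult_distrib ac_simps)
qed

lemma dixon_term_eq_0:
  assumes "2 * m < n"
  shows "dixon_term b c m n = 0"
proof -
  have "pochhammer (- of_nat (2 * m) :: 'a) n = 0"
    using assms by (rule pochhammer_of_nat_eq_0_lemma)
  then show ?thesis
    by (simp add: dixon_term_def hyp3F2_term_def)
qed

context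
  fixes b c :: "'a::field_char_0"
  assumes b: "b - 1 \<notin> \<int>\<^sub>\<le>\<^sub>0" and c: "c - 1 \<notin> \<int>\<^sub>\<le>\<^sub>0" and bc: "b + c \<notin> \<int>\<^sub>\<le>\<^sub>0"
begin

lemma dixon_m_factors_nonzero:
  fixes m :: nat
  defines "M \<equiv> of_nat m"
  shows "b + 2 * M \<noteq> 0" "b + 2 * M + 1 \<noteq> 0" "c + 2 * M \<noteq> 0" "c + 2 * M + 1 \<noteq> 0"
    and "b + c + M \<noteq> 0"
  using add_of_int_neq_0[OF b, of "2 * int m"] add_of_int_neq_0[OF b, of "2 * int m + 1"]
    add_of_int_neq_0[OF c, of "2 * int m"] add_of_int_neq_0[OF c, of "2 * int m + 1"]
    plus_of_nat_eq_0_imp[of "b + c" m] bc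
  by (auto simp: M_def algebra_simps)

lemma dixon_mn_factors_nonzero:
  fixes m n :: nat
  defines "M \<equiv> of_nat m" and "N \<equiv> of_nat n"
  assumes "n \<le> 2 * m + 1"
  shows "b + 2 * M + 1 - N \<noteq> 0" "b + 2 * M - N \<noteq> 0" "c + 2 * M + 1 - N \<noteq> 0" "c + 2 * M - N \<noteq> 0"
  using add_of_int_neq_0[OF b, of "2 * int m + 1 - int n"] add_of_int_neq_0[OF b, of "2 * int m - int n"]
    add_of_int_neq_0[OF c, of "2 * int m + 1 - int n"] add_of_int_neq_0[OF c, of "2 * int m - int n"] assms(3)
  by (simp_all add: M_def N_def algebra_simps)

lemma dixon_ratio_mult_term:
  fixes m n :: nat
  defines "M \<equiv> of_nat m" and "N \<equiv> of_nat n"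
  shows "dixon_ratio b c M * dixon_term b c m n = dixon_term b c (Suc m) n *
    (2 * ((b + M) * (c + M) * (b + c + 2 * M) * (b + c + 2 * M + 1) * ((2 * M + 2 - N) * (2 * M + 1 - N)))
     / (2 * (M + 1) * (b + c + M) * ((b + 2 * M + 1 - N) * (b + 2 * M - N) * (c + 2 * M + 1 - N) * (c + 2 * M - N))))"
    (is "_ = _ * (?numerator / ?denominator)")
proof -
  note nonzero = dixon_m_factors_nonzero[of m, folded M_def]
  define E where "E = (2 * M + 1) * ((b + 2 * M) * (b + 2 * M + 1) * ((c + 2 * M) * (c + 2 * M + 1)))"
  have "2 * M + 1 \<noteq> 0"
    using of_nat_add_1_neq_0[of "2 * m"] by (simp add: M_def)
  then have "E \<noteq> 0"
    using nonzero by (simp add: E_def)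
  have "dixon_ratio b c M * dixon_term b c m n
      = dixon_term b c (Suc m) n * (?numerator * E / (?denominator * E))"
    unfolding dixon_term_Suc_left[of b m c n, folded M_def N_def, OF nonzero(1-4)] dixon_ratio_def E_def
    by (simp only: times_divide_eq_left times_divide_eq_right divide_divide_eq_left mult_ac)
  also have "\<dots> = dixon_term b c (Suc m) n * (?numerator / ?denominator)"
    using \<open>E \<noteq> 0\<close> by simp
  finally show ?thesis .
qed

lemma dixon_telescoping:
  fixes m n :: nat
  assumes "n \<le> 2 * m + 1"
  shows "dixon_term b c (Suc m) n - dixon_ratio b c (of_nat m) * dixon_term b c m n
    = dixon_term b c (Suc m) (Suc n) * dixon_certificate b c (of_nat m) (of_nat (Suc n))
      - dixon_term b c (Suc m) n * dixon_certificate b c (of_nat m) (of_nat n)"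
proof -
  define M N :: 'a where "M = of_nat m" and "N = of_nat n"
  define T where "T = dixon_term b c (Suc m) n"
  define q where "q = 2 * ((b + M) * (c + M) * (b + c + 2 * M) * (b + c + 2 * M + 1) * ((2 * M + 2 - N) * (2 * M + 1 - N)))
     / (2 * (M + 1) * (b + c + M) * ((b + 2 * M + 1 - N) * (b + 2 * M - N) * (c + 2 * M + 1 - N) * (c + 2 * M - N)))"
  define r where "r = (N - 2 * M - 2) * (b + N) * (c + N) / ((b + 2 * M + 1 - N) * (c + 2 * M + 1 - N) * (N + 1))"
  have "M + 1 \<noteq> 0" "N + 1 \<noteq> 0"
    unfolding M_def N_def by (rule of_nat_add_1_neq_0)+
  then have "2 * (M + 1) * (b + c + M) \<noteq> 0"
    using dixon_m_factors_nonzero(5)[of m] unfolding M_def by (metis mult_eq_0_iff zero_neq_numeral)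
  then have certificate: "1 - q = r * dixon_certificate b c M (N + 1) - dixon_certificate b c M N"
    unfolding q_def r_def using dixon_mn_factors_nonzero[OF assms, folded M_def N_def] \<open>N + 1 \<noteq> 0\<close>
    by (intro dixon_certificate_identity) simp_all
  have left: "dixon_ratio b c M * dixon_term b c m n = T * q"
    unfolding T_def q_def M_def N_def by (rule dixon_ratio_mult_term)
  have right: "dixon_term b c (Suc m) (Suc n) = T * r"
    using dixon_term_Suc_right[of b c "Suc m" n] by (simp add: T_def r_def M_def N_def algebra_simps)
  have telescoped: "T - T * q = T * r * dixon_certificate b c M (N + 1) - T * dixon_certificate b c M N"
    using arg_cong[OF certificate, of "\<lambda>x. T * x"] by (simp add: algebra_simps)
  have "of_nat (Suc n) = N + 1"
    by (simp add: N_def)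
  then show ?thesis
    unfolding left right M_def[symmetric] N_def[symmetric] T_def[symmetric] by (simp only: telescoped)
qed

lemma dixon_certificate_endpoint:
  "dixon_certificate b c (of_nat m) (of_nat (2 * m + 2)) = -1"
proof -
  define M :: 'a where "M = of_nat m"
  define D where "D = 2 * (M + 1) * (b + c + M) * (b - 1) * (c - 1)"
  have "M + 1 \<noteq> 0"
    unfolding M_def by (rule of_nat_add_1_neq_0)
  moreover have "b - 1 \<noteq> 0" "c - 1 \<noteq> 0"
    using add_of_int_neq_0[OF b, of "-1"] add_of_int_neq_0[OF c, of "-1"] by simp_all
  ultimately have "D \<noteq> 0"
    using dixon_m_factors_nonzero(5)[of m, folded M_def] unfolding D_def by (metis mult_eq_0_iff zero_neq_numeral)
  have "b + 2 * M + 1 - (2 * M + 2) = b - 1" "c + 2 * M + 1 - (2 * M + 2) = c - 1"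
    by simp_all
  then have "dixon_certificate b c M (2 * M + 2) = (2 * M + 2) * ((b + c + M) * (b - 1) * (1 - c)) / D"
    by (simp only: dixon_certificate_def dixon_cert_poly_endpoint D_def)
  also have "(2 * M + 2) * ((b + c + M) * (b - 1) * (1 - c)) = - D"
    by (simp add: D_def algebra_simps)
  finally have "dixon_certificate b c M (2 * M + 2) = -1"
    using \<open>D \<noteq> 0\<close> by simp
  moreover have "of_nat (2 * m + 2) = 2 * M + 2"
    by (simp add: M_def)
  ultimately show ?thesis
    by (simp only: M_def)
qed

lemma dixon_sum_Suc:
  "dixon_sum b c (Suc m) = dixon_ratio b c (of_nat m) * dixon_sum b c m"
proof -
  define G where "G n = dixon_term b c (Suc m) n * dixon_certificate b c (of_nat m) (of_nat n)" for n
  have "(\<Sum>n<2 * m + 2. dixon_term b c (Suc m) n - dixon_ratio b c (of_nat m) * dixon_term b c m n)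
      = (\<Sum>n<2 * m + 2. G (Suc n) - G n)"
    by (intro sum.cong refl) (simp add: G_def dixon_telescoping)
  also have "\<dots> = G (2 * m + 2) - G 0"
    by (rule sum_lessThan_telescope)
  also have "\<dots> = - dixon_term b c (Suc m) (2 * m + 2)"
    unfolding G_def dixon_certificate_endpoint by (simp add: dixon_certificate_def)
  finally have telescoped: "(\<Sum>n<2 * m + 2. dixon_term b c (Suc m) n)
      - dixon_ratio b c (of_nat m) * (\<Sum>n<2 * m + 2. dixon_term b c m n)
      = - dixon_term b c (Suc m) (2 * m + 2)"
    by (simp only: sum_subtractf sum_distrib_left)
  have "dixon_sum b c (Suc m) = (\<Sum>n<2 * m + 2. dixon_term b c (Suc m) n) + dixon_term b c (Suc m) (2 * m + 2)"
    by (simp add: dixon_sum_def lessThan_Suc_atMost[symmetric])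
  moreover have "dixon_sum b c m = (\<Sum>n<2 * m + 2. dixon_term b c m n)"
    using dixon_term_eq_0[of m "2 * m + 1" b c] by (simp add: dixon_sum_def lessThan_Suc_atMost[symmetric])
  ultimately show ?thesis
    using telescoped by (simp add: algebra_simps)
qed

lemma dixon_sum_eq_closed_form: "dixon_sum b c m = dixon_closed_form b c m"
proof (induction m)
  case 0
  show ?case
    by (simp add: dixon_sum_def dixon_term_def hyp3F2_term_def dixon_closed_form_def)
next
  case (Suc m)
  then show ?case
    by (simp add: dixon_sum_Suc dixon_closed_form_Suc)
qed

end

theorem mainTheorem10:
  fixes m k :: nat and \<gamma> :: complex
  assumes "m \<ge> 1" and "k \<ge> 1"
    and "\<gamma> \<notin> \<int>\<^sub>\<le>\<^sub>0" and "1 - 2 * of_nat m - \<gamma> \<notin> \<int>\<^sub>\<le>\<^sub>0"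
  shows "hyp3F2_trunc (- 2 * of_nat m) (1 + of_nat k) \<gamma>
            (- 2 * of_nat m - of_nat k) (1 - 2 * of_nat m - \<gamma>) 1 (2 * m)
         = pochhammer (1 + of_nat k) m * pochhammer \<gamma> m * 2 ^ (2 * m)
             * pochhammer (1 / 2) m * pochhammer (1 + of_nat k + \<gamma>) (2 * m)
           / (pochhammer (1 + of_nat k) (2 * m) * pochhammer \<gamma> (2 * m)
             * pochhammer (1 + of_nat k + \<gamma>) m)"
proof -
  have "(1 + of_nat k) - 1 \<notin> (\<int>\<^sub>\<le>\<^sub>0 :: complex set)"
    using \<open>k \<ge> 1\<close> by (simp add: of_nat_in_nonpos_Ints_iff)
  moreover have "\<gamma> - 1 \<notin> \<int>\<^sub>\<le>\<^sub>0"
    using diff_one_notin_nonpos_Ints[of \<gamma> "2 * m"] assms(3,4) by simp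
  moreover have "1 + of_nat k + \<gamma> \<notin> \<int>\<^sub>\<le>\<^sub>0"
    using plus_of_nat_notin_nonpos_Ints[OF assms(3), of "1 + k"] by (simp add: ac_simps)
  ultimately have "dixon_sum (1 + of_nat k) \<gamma> m = dixon_closed_form (1 + of_nat k) \<gamma> m"
    by (rule dixon_sum_eq_closed_form)
  moreover have "- 2 * of_nat m - of_nat k = 1 - 2 * of_nat m - (1 + of_nat k :: complex)"
    by simp
  ultimately show ?thesis
    by (simp only: hyp3F2_trunc_at_1 dixon_sum_def dixon_term_def dixon_closed_form_def)
qed

end
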